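(* Let $k$ be a field of characteristic $p>0$ and $A$ a $k$-vector space of finite dimension $n\ge1$. For every $r\ge pn-1$, $S_{\le r}A=SA$.
   Context: $SA=\bigoplus_{m\ge0}S^mA$ is the symmetric algebra of $A$ ($S^0A=k$, $S^mA$ the $m$-th symmetric power, with pure symmetric tensors $a_1\otimes_s\dots\otimes_s a_m$). The linear map $\partial\colon SA\to SA\otimes A$ is given by $\partial(\lambda)=0$ for $\lambda\in S^0A$ and $\partial(a_1\otimes_s\dots\otimes_s a_m)=\sum_{i=1}^m(a_1\otimes_s\dots\otimes_s a_{i-1}\otimes_s a_{i+1}\otimes_s\dots\otimes_s a_m)\otimes a_i$. Iterates: $\partial^0=1_{SA}$ and $\partial^{r+1}:=\partial;(\partial^r\otimes 1_A)\colon SA\to SA\otimes A^{\otimes(r+1)}$. Define $S_{\le r}A:=\ker(\partial^{r+1})\subseteq SA$. *)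

theory Defs
  imports Main "HOL-Library.Multiset" "HOL-Library.Cardinality"
begin

text \<open>A is the k-vector space with finite basis indexed by the type 'b (so dim A = CARD('b)).
  A basis of S^m A is given by the symmetric tensors of basis vectors, i.e. multisets of
  size m over 'b; a basis of A^{tensor r} is given by lists of length r over 'b.
  An element of SA is a finitely supported function 'b multiset => 'k; an element of
  SA tensor A^{tensor r} is a finitely supported function on pairs (multiset, list).\<close>

type_synonym ('b, 'k) tens = "'b multiset \<times> 'b list \<Rightarrow> 'k"

definition fin_supp :: "('a \<Rightarrow> 'k::zero) \<Rightarrow> bool" where
  "fin_supp f \<longleftrightarrow> finite {x. f x \<noteq> 0}"

text \<open>The map partial tensor 1 on SA tensor A^{tensor r}, extended linearly from basis elements:
  on a basis element (M, w) with M = a_1 ... a_m it gives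
  sum over positions i of (M minus a_i, a_i # w), so the coefficient of (N, v) is the number
  of positions i (counted with multiplicity in M) whose term equals (N, v).\<close>

definition del1 :: "('b, 'k::field) tens \<Rightarrow> ('b, 'k) tens" where
  "del1 f = (\<lambda>(N, v). \<Sum>x\<in>{x. f x \<noteq> 0}.
      f x * of_nat (size (filter_mset (\<lambda>i. (fst x - {#i#}, i # snd x) = (N, v)) (fst x))))"

text \<open>SA identified with SA tensor A^{tensor 0}.\<close>

definition emb0 :: "('b multiset \<Rightarrow> 'k::zero) \<Rightarrow> ('b, 'k) tens" where
  "emb0 f = (\<lambda>(M, w). if w = [] then f M else 0)"

text \<open>partial^r : SA -> SA tensor A^{tensor r}; partial^0 = id and
  partial^{r+1} = partial ; (partial^r tensor 1), which is the r+1 fold iterate of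
  (partial tensor 1) starting from SA.\<close>

definition delpow :: "nat \<Rightarrow> ('b multiset \<Rightarrow> 'k::field) \<Rightarrow> ('b, 'k) tens" where
  "delpow r f = (del1 ^^ r) (emb0 f)"

definition S_le :: "nat \<Rightarrow> ('b multiset \<Rightarrow> 'k::field) set" where
  "S_le r = {f. fin_supp f \<and> delpow (Suc r) f = (\<lambda>_. 0)}"

definition SA :: "('b multiset \<Rightarrow> 'k::zero) set" where
  "SA = {f. fin_supp f}"

end

theory Submission
  imports Defs "HOL.Binomial_Plus"
begin

text \<open>
  By induction on r, the coefficient of the basis element (N, v) of SA \<otimes> A^{\<otimes>r}
  in \<partial>^r f is the coefficient of the monomial N + v in f times a positive integer
  c(N, v) (delpow_coeff N v), which counts the ways of peeling the letters of v off
  N + v one at a time. For each basis vector b, c(N, v) contains the rising factorial of length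
  count v b starting at count N b + 1, so it is divisible by (count v b)!.
  If v has length at least p * dim A, some b occurs at least p times in v, hence
  p divides c(N, v) and the coefficient vanishes in characteristic p.
\<close>

lemma del1_Nil: "del1 g (N, []) = 0"
  unfolding del1_def by (simp add: filter_mset_False)

lemma filter_mset_peel_eq:
  "filter_mset (\<lambda>i. (M - {#i#}, i # w) = (N, j # u)) M =
    (if (M, w) = (add_mset j N, u) then replicate_mset (count M j) j else {#})"
proof (cases "(M, w) = (add_mset j N, u)")
  case True
  have "filter_mset (\<lambda>i. (M - {#i#}, i # w) = (N, j # u)) M = filter_mset (\<lambda>i. i = j) M"
    using True by (intro filter_mset_cong0) auto
  also have "\<dots> = replicate_mset (count M j) j"
    by (rule filter_eq_replicate_mset)
  finally show ?thesis
    unfolding if_P[OF True] .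
next
  case False
  have "\<not> (M - {#i#}, i # w) = (N, j # u)" if "i \<in># M" for i
    using False that by (auto simp: insert_DiffM)
  then show ?thesis
    unfolding if_not_P[OF False] filter_mset_eq_mempty_iff by blast
qed

lemma del1_Cons:
  assumes "fin_supp g"
  shows "del1 g (N, j # u) = g (add_mset j N, u) * of_nat (count N j + 1)"
proof -
  have summand: "g x * of_nat (size (filter_mset (\<lambda>i. (fst x - {#i#}, i # snd x) = (N, j # u)) (fst x)))
      = (if x = (add_mset j N, u) then g x * of_nat (count N j + 1) else 0)" for x
    unfolding filter_mset_peel_eq by (cases x) simp
  have "del1 g (N, j # u) =
      (\<Sum>x\<in>{x. g x \<noteq> 0}. if x = (add_mset j N, u) then g x * of_nat (count N j + 1) else 0)"
    unfolding del1_def prod.case summand ..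
  also have "\<dots> = g (add_mset j N, u) * of_nat (count N j + 1)"
    using assms by (simp add: fin_supp_def sum.delta')
  finally show ?thesis .
qed

lemma fin_supp_del1:
  assumes "fin_supp g"
  shows "fin_supp (del1 g)"
proof -
  let ?peel = "\<lambda>(M, w). (\<lambda>i. (M - {#i#}, i # w)) ` set_mset M"
  have "{y. del1 g y \<noteq> 0} \<subseteq> (\<Union>x\<in>{x. g x \<noteq> 0}. ?peel x)"
  proof
    fix y assume y: "y \<in> {y. del1 g y \<noteq> 0}"
    obtain N j u where y_eq: "y = (N, j # u)"
    proof -
      obtain N v where y_Nv: "y = (N, v)"
        by fastforce
      with y have "v \<noteq> []"
        by (auto simp: del1_Nil)
      with y_Nv that show thesis
        by (cases v) auto
    qed
    with y have "g (add_mset j N, u) \<noteq> 0"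
      by (simp add: del1_Cons[OF assms])
    moreover have "y \<in> ?peel (add_mset j N, u)"
      unfolding y_eq by (auto intro: image_eqI[of _ _ j])
    ultimately show "y \<in> (\<Union>x\<in>{x. g x \<noteq> 0}. ?peel x)"
      by blast
  qed
  moreover have "finite (\<Union>x\<in>{x. g x \<noteq> 0}. ?peel x)"
    using assms by (auto simp: fin_supp_def)
  ultimately show ?thesis
    unfolding fin_supp_def by (rule finite_subset)
qed

lemma fin_supp_emb0:
  assumes "fin_supp f"
  shows "fin_supp (emb0 f)"
proof -
  have "{x. emb0 f x \<noteq> 0} \<subseteq> (\<lambda>M. (M, [])) ` {M. f M \<noteq> 0}"
    by (auto simp: emb0_def split: if_splits)
  with assms show ?thesis
    unfolding fin_supp_def by (auto intro: finite_subset)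
qed

lemma delpow_0: "delpow 0 f = emb0 f"
  by (simp add: delpow_def)

lemma delpow_Suc: "delpow (Suc r) f = del1 (delpow r f)"
  by (simp add: delpow_def)

lemma fin_supp_delpow: "fin_supp f \<Longrightarrow> fin_supp (delpow r f)"
  by (induction r) (simp_all add: delpow_0 delpow_Suc fin_supp_emb0 fin_supp_del1)

fun delpow_coeff :: "'b multiset \<Rightarrow> 'b list \<Rightarrow> nat" where
  "delpow_coeff N [] = 1"
| "delpow_coeff N (j # u) = delpow_coeff (add_mset j N) u * (count N j + 1)"

lemma delpow_apply:
  assumes "fin_supp f"
  shows "delpow r f (N, v) =
    (if length v = r then f (N + mset v) * of_nat (delpow_coeff N v) else 0)"
proof (induction r arbitrary: N v)
  case 0
  show ?case
    by (simp add: delpow_0 emb0_def)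
next
  case (Suc r)
  show ?case
  proof (cases v)
    case Nil
    then show ?thesis
      by (simp add: delpow_Suc del1_Nil)
  next
    case (Cons j u)
    then show ?thesis
      using Suc.IH by (simp add: delpow_Suc del1_Cons fin_supp_delpow[OF assms] algebra_simps)
  qed
qed

lemma fact_dvd_pochhammer_nat: "fact k dvd pochhammer (a::nat) k"
proof -
  have "int (fact k) dvd int (pochhammer a k)"
    using fact_dvd_pochhammer[of k "int a"] by (simp add: pochhammer_of_nat)
  then show ?thesis
    by (simp only: int_dvd_int_iff)
qed

lemma pochhammer_dvd_delpow_coeff:
  "pochhammer (count N b + 1) (count (mset v) b) dvd delpow_coeff N v"
proof (induction v arbitrary: N)
  case Nil
  then show ?case by simp
next
  case (Cons j u)
  show ?case
  proof (cases "j = b")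
    case True
    then have pochhammer_Cons: "pochhammer (count N b + 1) (count (mset (j # u)) b) =
        pochhammer (count (add_mset j N) b + 1) (count (mset u) b) * (count N j + 1)"
      by (simp add: pochhammer_rec)
    show ?thesis
      unfolding pochhammer_Cons delpow_coeff.simps by (intro mult_dvd_mono Cons.IH dvd_refl)
  next
    case False
    then have counts: "count (add_mset j N) b = count N b"
      "count (mset (j # u)) b = count (mset u) b"
      by simp_all
    show ?thesis
      unfolding counts(2) delpow_coeff.simps
      by (rule dvd_mult2) (rule Cons.IH[of "add_mset j N", unfolded counts(1)])
  qed
qed

lemma dvd_delpow_coeff:
  assumes "0 < p" and "p \<le> count (mset v) b"
  shows "p dvd delpow_coeff N v"
proof -
  have "p dvd fact (count (mset v) b)"
    using assms by (simp add: dvd_fact)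
  also have "\<dots> dvd pochhammer (count N b + 1) (count (mset v) b)"
    by (rule fact_dvd_pochhammer_nat)
  also have "\<dots> dvd delpow_coeff N v"
    by (rule pochhammer_dvd_delpow_coeff)
  finally show ?thesis .
qed

lemma exists_count_ge:
  fixes v :: "'b::finite list"
  assumes "p * CARD('b) \<le> length v"
  shows "\<exists>b. p \<le> count (mset v) b"
proof (rule ccontr)
  assume "\<not> ?thesis"
  then have "count (mset v) b < p" for b
    by (meson not_le)
  then have "(\<Sum>b\<in>UNIV. count (mset v) b) < (\<Sum>b\<in>(UNIV::'b set). p)"
    by (intro sum_strict_mono) auto
  then show False
    using assms sum_mono2[of UNIV "set v" "count (mset v)"]
    by (simp add: size_multiset_overloaded_eq mult.commute flip: size_mset)
qed

lemma delpow_eq_0_if_char: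
  fixes f :: "'b::finite multiset \<Rightarrow> 'k::field"
  assumes "fin_supp f" and "0 < CHAR('k)" and "CHAR('k) * CARD('b) \<le> r"
  shows "delpow r f = (\<lambda>_. 0)"
proof
  fix x :: "'b multiset \<times> 'b list"
  obtain N v where x: "x = (N, v)"
    by fastforce
  show "delpow r f x = 0"
  proof (cases "length v = r")
    case True
    then obtain b where "CHAR('k) \<le> count (mset v) b"
      using exists_count_ge assms(3) by metis
    then have "(of_nat (delpow_coeff N v) :: 'k) = 0"
      using assms(2) by (simp add: dvd_delpow_coeff of_nat_eq_0_iff_char_dvd)
    then show ?thesis
      by (simp add: x delpow_apply[OF assms(1)])
  qed (simp add: x delpow_apply[OF assms(1)])
qed

theorem proposition7p6:
  fixes p n r :: nat
  assumes "CHAR('k) = p" and "p > 0"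
    and "CARD('b) = n" and "n \<ge> 1"
    and "r \<ge> p * n - 1"
  shows "(S_le r :: ('b::finite multiset \<Rightarrow> 'k::field) set) = SA"
proof
  show "(S_le r :: ('b::finite multiset \<Rightarrow> 'k::field) set) \<subseteq> SA"
    by (auto simp: S_le_def SA_def)
  have "CHAR('k) * CARD('b) \<le> Suc r"
    using assms by (simp add: le_diff_conv)
  then show "SA \<subseteq> (S_le r :: ('b::finite multiset \<Rightarrow> 'k::field) set)"
    using assms(1,2) by (auto simp: S_le_def SA_def delpow_eq_0_if_char)
qed

end
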